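(* Let $G_1^o,G_2^o$ be ordered abelian groups and $H_1,H_2$ abelian groups endowed with valuational quasi-orders. Then $G_1^o\boxtimes H_1\equiv G_2^o\boxtimes H_2$ if and only if $G_1^o\equiv G_2^o$ and $H_1\equiv H_2$, where elementary equivalence is in the language $\{0,+,-,\precsim\}$.
   Context: A quasi-order $\precsim$ on an abelian group $H$ is valuational if $a\precsim b\Leftrightarrow w(b)\le w(a)$ for some valuation $w$ on $H$ (a map $w:H\to\Delta\cup\{\infty\}$, $\Delta$ totally ordered, with $w(a)=\infty\Leftrightarrow a=0$, $w(a+b)\ge\min(w(a),w(b))$, $w(-a)=w(a)$). For an ordered abelian group $(A,\le)$ and an abelian group $H$ with a valuational quasi-order $\precsim_H$, the compatible product $A\boxtimes H$ is the group $A\times H$ with the quasi-order $(a,h)\precsim(a',h')\Leftrightarrow(h=h'=0\wedge a\le a')\vee(h'\neq0\wedge h\precsim_H h')$. An ordered group is viewed as an $\{0,+,-,\precsim\}$-structure with $\precsim$ interpreted as its order, a valuationally quasi-ordered group with $\precsim$ interpreted as its quasi-order; $-$ is unary negation. *)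

theory Defs
  imports Main "HOL-Library.Product_Plus"
begin

datatype tm = Var nat | Zero | Plus tm tm | Neg tm

datatype fm = FEq tm tm | FRel tm tm | FFalse | FNot fm | FConj fm fm | FDisj fm fm
  | FImp fm fm | FEx nat fm | FAll nat fm

fun tvars :: "tm \<Rightarrow> nat set" where
  "tvars (Var n) = {n}"
| "tvars Zero = {}"
| "tvars (Plus s t) = tvars s \<union> tvars t"
| "tvars (Neg t) = tvars t"

fun fvars :: "fm \<Rightarrow> nat set" where
  "fvars (FEq s t) = tvars s \<union> tvars t"
| "fvars (FRel s t) = tvars s \<union> tvars t"
| "fvars FFalse = {}"
| "fvars (FNot p) = fvars p"
| "fvars (FConj p q) = fvars p \<union> fvars q"
| "fvars (FDisj p q) = fvars p \<union> fvars q"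
| "fvars (FImp p q) = fvars p \<union> fvars q"
| "fvars (FEx n p) = fvars p - {n}"
| "fvars (FAll n p) = fvars p - {n}"

fun teval :: "(nat \<Rightarrow> 'a::ab_group_add) \<Rightarrow> tm \<Rightarrow> 'a" where
  "teval e (Var n) = e n"
| "teval e Zero = 0"
| "teval e (Plus s t) = teval e s + teval e t"
| "teval e (Neg t) = - teval e t"

fun sat :: "('a::ab_group_add \<Rightarrow> 'a \<Rightarrow> bool) \<Rightarrow> (nat \<Rightarrow> 'a) \<Rightarrow> fm \<Rightarrow> bool" where
  "sat R e (FEq s t) = (teval e s = teval e t)"
| "sat R e (FRel s t) = R (teval e s) (teval e t)"
| "sat R e FFalse = False"
| "sat R e (FNot p) = (\<not> sat R e p)"
| "sat R e (FConj p q) = (sat R e p \<and> sat R e q)"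
| "sat R e (FDisj p q) = (sat R e p \<or> sat R e q)"
| "sat R e (FImp p q) = (sat R e p \<longrightarrow> sat R e q)"
| "sat R e (FEx n p) = (\<exists>x. sat R (e(n := x)) p)"
| "sat R e (FAll n p) = (\<forall>x. sat R (e(n := x)) p)"

definition elem_equiv ::
  "('a::ab_group_add \<Rightarrow> 'a \<Rightarrow> bool) \<Rightarrow> ('b::ab_group_add \<Rightarrow> 'b \<Rightarrow> bool) \<Rightarrow> bool" where
  "elem_equiv R S \<longleftrightarrow>
     (\<forall>\<phi>. fvars \<phi> = {} \<longrightarrow> (sat R (\<lambda>_. 0) \<phi> \<longleftrightarrow> sat S (\<lambda>_. 0) \<phi>))"

definition ordered_group :: "('a::ab_group_add \<Rightarrow> 'a \<Rightarrow> bool) \<Rightarrow> bool" where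
  "ordered_group le \<longleftrightarrow>
     (\<forall>a. le a a) \<and> (\<forall>a b. le a b \<and> le b a \<longrightarrow> a = b) \<and>
     (\<forall>a b c. le a b \<and> le b c \<longrightarrow> le a c) \<and> (\<forall>a b. le a b \<or> le b a) \<and>
     (\<forall>a b c. le a b \<longrightarrow> le (a + c) (b + c))"

text \<open>Values in \<Delta> \<union> {\<infinity>} are represented as 'v option, None = \<infinity>, the top element.\<close>

fun vle :: "'v::linorder option \<Rightarrow> 'v option \<Rightarrow> bool" where
  "vle _ None = True"
| "vle None (Some _) = False"
| "vle (Some x) (Some y) = (x \<le> y)"

definition valuation :: "('a::ab_group_add \<Rightarrow> 'v::linorder option) \<Rightarrow> bool" where
  "valuation w \<longleftrightarrow>
     (\<forall>a. w a = None \<longleftrightarrow> a = 0) \<and>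
     (\<forall>a b. vle (w a) (w (a + b)) \<or> vle (w b) (w (a + b))) \<and>
     (\<forall>a. w (- a) = w a)"

definition valuational_via ::
  "('a::ab_group_add \<Rightarrow> 'v::linorder option) \<Rightarrow> ('a \<Rightarrow> 'a \<Rightarrow> bool) \<Rightarrow> bool" where
  "valuational_via w q \<longleftrightarrow> valuation w \<and> (\<forall>a b. q a b \<longleftrightarrow> vle (w b) (w a))"

definition compat_prod ::
  "('a::ab_group_add \<Rightarrow> 'a \<Rightarrow> bool) \<Rightarrow> ('b::ab_group_add \<Rightarrow> 'b \<Rightarrow> bool)
     \<Rightarrow> ('a \<times> 'b) \<Rightarrow> ('a \<times> 'b) \<Rightarrow> bool" where
  "compat_prod le q x y \<longleftrightarrow>
     (snd x = 0 \<and> snd y = 0 \<and> le (fst x) (fst y)) \<or> (snd y \<noteq> 0 \<and> q (snd x) (snd y))"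

end

theory Submission
  imports Defs
begin

text \<open>
  Feferman--Vaught for the compatible product: the quasi-order of \<open>A \<boxtimes> H\<close> is a Boolean
  combination of \<open>\<le>\<^sub>A\<close> on first coordinates and of \<open>\<precsim>\<^sub>H\<close> and \<open>= 0\<close> on second ones,
  so every formula over \<open>A \<boxtimes> H\<close> is equivalent to a finite disjunction of conjunctions
  \<open>\<psi> \<and> \<chi>\<close>, where \<open>\<psi>\<close> is read in \<open>A\<close> on the first and \<open>\<chi>\<close> in \<open>H\<close> on the second coordinates.
  Hence the theory of the product is determined by those of the factors.
  Conversely both factors are interpretable in the product: the subgroup \<open>A \<times> 0\<close> is
  defined by \<open>x \<precsim> 0 \<or> -x \<precsim> 0\<close> and carries the order of \<open>A\<close>, while \<open>H\<close> is the quotient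
  by it, on which the product quasi-order induces \<open>\<precsim>\<^sub>H\<close> since \<open>h \<precsim>\<^sub>H 0\<close> only for \<open>h = 0\<close>.
\<close>

lemma teval_prod:
  "teval (e :: nat \<Rightarrow> 'a::ab_group_add \<times> 'b::ab_group_add) t
     = (teval (fst \<circ> e) t, teval (snd \<circ> e) t)"
  by (induction t) (auto simp: prod_eq_iff)

lemma comp_const_zero: "f \<circ> (\<lambda>_. 0 :: 'a::ab_group_add \<times> 'b::ab_group_add) = (\<lambda>_. f 0)"
  by (simp add: fun_eq_iff)

lemma elem_equiv_via_translation:
  fixes T :: "fm \<Rightarrow> fm"
  assumes closed: "\<And>\<phi>. fvars \<phi> = {} \<Longrightarrow> fvars (T \<phi>) = {}"
    and trans1: "\<And>\<phi>. fvars \<phi> = {} \<Longrightarrow> sat R1 (\<lambda>_. 0) \<phi> \<longleftrightarrow> sat S1 (\<lambda>_. 0) (T \<phi>)"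
    and trans2: "\<And>\<phi>. fvars \<phi> = {} \<Longrightarrow> sat R2 (\<lambda>_. 0) \<phi> \<longleftrightarrow> sat S2 (\<lambda>_. 0) (T \<phi>)"
    and "elem_equiv S1 S2"
  shows "elem_equiv R1 R2"
proof -
  have "sat R1 (\<lambda>_. 0) \<phi> \<longleftrightarrow> sat R2 (\<lambda>_. 0) \<phi>" if "fvars \<phi> = {}" for \<phi>
    using trans1[OF that] trans2[OF that] closed[OF that] \<open>elem_equiv S1 S2\<close>
    unfolding elem_equiv_def by simp
  then show ?thesis unfolding elem_equiv_def by blast
qed

definition FTrue :: fm where "FTrue = FNot FFalse"

lemma sat_FTrue [simp]: "sat R e FTrue" and fvars_FTrue [simp]: "fvars FTrue = {}"
  by (simp_all add: FTrue_def)

text \<open>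
  A list \<open>[(\<psi>\<^sub>1,\<chi>\<^sub>1), \<dots>, (\<psi>\<^sub>n,\<chi>\<^sub>n)]\<close> stands for \<open>\<Or>\<^sub>i (\<psi>\<^sub>i \<and> \<chi>\<^sub>i)\<close>, with \<open>\<psi>\<^sub>i\<close> read in the first
  and \<open>\<chi>\<^sub>i\<close> in the second factor.
\<close>

definition holds_some ::
  "('a::ab_group_add \<Rightarrow> 'a \<Rightarrow> bool) \<Rightarrow> ('b::ab_group_add \<Rightarrow> 'b \<Rightarrow> bool)
     \<Rightarrow> (nat \<Rightarrow> 'a) \<Rightarrow> (nat \<Rightarrow> 'b) \<Rightarrow> (fm \<times> fm) list \<Rightarrow> bool" where
  "holds_some R S e f L \<longleftrightarrow> (\<exists>p\<in>set L. sat R e (fst p) \<and> sat S f (snd p))"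

fun neg_decomp :: "(fm \<times> fm) list \<Rightarrow> (fm \<times> fm) list" where
  "neg_decomp [] = [(FTrue, FTrue)]"
| "neg_decomp ((\<psi>, \<chi>) # L) =
     map (\<lambda>p. (FConj (fst p) (FNot \<psi>), snd p)) (neg_decomp L)
     @ map (\<lambda>p. (fst p, FConj (snd p) (FNot \<chi>))) (neg_decomp L)"

definition conj_decomp :: "(fm \<times> fm) list \<Rightarrow> (fm \<times> fm) list \<Rightarrow> (fm \<times> fm) list" where
  "conj_decomp L M = [(FConj (fst p) (fst r), FConj (snd p) (snd r)). p \<leftarrow> L, r \<leftarrow> M]"

definition ex_decomp :: "nat \<Rightarrow> (fm \<times> fm) list \<Rightarrow> (fm \<times> fm) list" where
  "ex_decomp n L = map (\<lambda>p. (FEx n (fst p), FEx n (snd p))) L"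

lemma holds_some_Nil: "\<not> holds_some R S e f []"
  by (simp add: holds_some_def)

lemma holds_some_append:
  "holds_some R S e f (L @ M) \<longleftrightarrow> holds_some R S e f L \<or> holds_some R S e f M"
  by (auto simp: holds_some_def)

lemma holds_some_neg_decomp:
  "holds_some R S e f (neg_decomp L) \<longleftrightarrow> \<not> holds_some R S e f L"
proof (induction L rule: neg_decomp.induct)
  case (2 \<psi> \<chi> L)
  let ?N = "neg_decomp L"
  have "holds_some R S e f (neg_decomp ((\<psi>, \<chi>) # L)) \<longleftrightarrow>
          (\<exists>p\<in>set ?N. sat R e (fst p) \<and> \<not> sat R e \<psi> \<and> sat S f (snd p)) \<or>
          (\<exists>p\<in>set ?N. sat R e (fst p) \<and> sat S f (snd p) \<and> \<not> sat S f \<chi>)"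
    unfolding neg_decomp.simps holds_some_def set_append set_map Bex_def image_iff
    by fastforce
  also have "\<dots> \<longleftrightarrow> holds_some R S e f ?N \<and> \<not> (sat R e \<psi> \<and> sat S f \<chi>)"
    unfolding holds_some_def by blast
  finally show ?case using 2 by (auto simp: holds_some_def)
qed (simp add: holds_some_def)

lemma holds_some_conj_decomp:
  "holds_some R S e f (conj_decomp L M) \<longleftrightarrow> holds_some R S e f L \<and> holds_some R S e f M"
  by (auto simp: holds_some_def conj_decomp_def)

lemma holds_some_ex_decomp:
  "holds_some R S e f (ex_decomp n L) \<longleftrightarrow> (\<exists>a b. holds_some R S (e(n := a)) (f(n := b)) L)"
  by (fastforce simp: holds_some_def ex_decomp_def)

fun decomp :: "fm \<Rightarrow> (fm \<times> fm) list" where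
  "decomp (FEq s t) = [(FEq s t, FEq s t)]"
| "decomp (FRel s t) =
     [(FRel s t, FConj (FEq s Zero) (FEq t Zero)), (FTrue, FConj (FNot (FEq t Zero)) (FRel s t))]"
| "decomp FFalse = []"
| "decomp (FNot \<phi>) = neg_decomp (decomp \<phi>)"
| "decomp (FConj \<phi> \<psi>) = conj_decomp (decomp \<phi>) (decomp \<psi>)"
| "decomp (FDisj \<phi> \<psi>) = decomp \<phi> @ decomp \<psi>"
| "decomp (FImp \<phi> \<psi>) = neg_decomp (decomp \<phi>) @ decomp \<psi>"
| "decomp (FEx n \<phi>) = ex_decomp n (decomp \<phi>)"
| "decomp (FAll n \<phi>) = neg_decomp (ex_decomp n (neg_decomp (decomp \<phi>)))"

theorem sat_compat_prod_decomp:
  "sat (compat_prod le q) e \<phi> \<longleftrightarrow> holds_some le q (fst \<circ> e) (snd \<circ> e) (decomp \<phi>)"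
proof (induction \<phi> arbitrary: e)
  case (FEq s t)
  show ?case by (simp add: holds_some_def teval_prod[of e] prod_eq_iff del: comp_apply)
next
  case (FRel s t)
  show ?case by (auto simp: holds_some_def teval_prod[of e] compat_prod_def simp del: comp_apply)
next
  case (FEx n \<phi>)
  show ?case
    by (simp only: sat.simps decomp.simps FEx.IH holds_some_ex_decomp fun_upd_comp
        split_paired_Ex fst_conv snd_conv)
next
  case (FAll n \<phi>)
  show ?case
    by (simp only: sat.simps decomp.simps FAll.IH holds_some_ex_decomp holds_some_neg_decomp
        fun_upd_comp split_paired_All fst_conv snd_conv not_ex not_not)
qed (simp_all add: holds_some_Nil holds_some_neg_decomp holds_some_conj_decomp holds_some_append)

definition decomp_vars :: "(fm \<times> fm) list \<Rightarrow> nat set" where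
  "decomp_vars L = (\<Union>p\<in>set L. fvars (fst p) \<union> fvars (snd p))"

lemma decomp_vars_append: "decomp_vars (L @ M) = decomp_vars L \<union> decomp_vars M"
  by (simp add: decomp_vars_def)

lemma decomp_vars_neg_decomp: "decomp_vars (neg_decomp L) \<subseteq> decomp_vars L"
  by (induction L rule: neg_decomp.induct) (auto simp: decomp_vars_def)

lemma decomp_vars_decomp: "decomp_vars (decomp \<phi>) \<subseteq> fvars \<phi>"
proof (induction \<phi>)
  case (FNot \<phi>)
  then show ?case using decomp_vars_neg_decomp by force
next
  case (FImp \<phi> \<psi>)
  then show ?case using decomp_vars_neg_decomp[of "decomp \<phi>"] by (auto simp: decomp_vars_append)
next
  case (FAll n \<phi>)
  then show ?case
    using decomp_vars_neg_decomp[of "decomp \<phi>"]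
      decomp_vars_neg_decomp[of "ex_decomp n (neg_decomp (decomp \<phi>))"]
    by (fastforce simp: decomp_vars_def ex_decomp_def)
qed (auto simp: decomp_vars_def conj_decomp_def ex_decomp_def)

lemma elem_equiv_compat_prod:
  assumes "elem_equiv le1 le2" and "elem_equiv q1 q2"
  shows "elem_equiv (compat_prod le1 q1) (compat_prod le2 q2)"
  unfolding elem_equiv_def
proof (intro allI impI)
  fix \<phi> assume "fvars \<phi> = {}"
  then have closed: "fvars (fst p) = {}" "fvars (snd p) = {}" if "p \<in> set (decomp \<phi>)" for p
    using decomp_vars_decomp[of \<phi>] that by (auto simp: decomp_vars_def)
  have "holds_some le1 q1 (\<lambda>_. 0) (\<lambda>_. 0) (decomp \<phi>) \<longleftrightarrow>
        holds_some le2 q2 (\<lambda>_. 0) (\<lambda>_. 0) (decomp \<phi>)"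
    using assms closed unfolding holds_some_def elem_equiv_def by (meson bex_cong)
  then show "sat (compat_prod le1 q1) (\<lambda>_. 0) \<phi> \<longleftrightarrow> sat (compat_prod le2 q2) (\<lambda>_. 0) \<phi>"
    by (simp add: sat_compat_prod_decomp comp_const_zero)
qed

definition in_first_factor :: "tm \<Rightarrow> fm" where
  "in_first_factor t = FDisj (FRel t Zero) (FRel (Neg t) Zero)"

lemma fvars_in_first_factor [simp]: "fvars (in_first_factor t) = tvars t"
  by (simp add: in_first_factor_def)

lemma ordered_group_le_zero_or_neg:
  assumes "ordered_group le"
  shows "le a 0 \<or> le (- a) 0"
proof -
  have "le a 0 \<or> le 0 a" and "le 0 a \<Longrightarrow> le (0 + - a) (a + - a)"
    using assms unfolding ordered_group_def by blast+
  then show ?thesis by auto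
qed

lemma sat_in_first_factor:
  assumes "ordered_group le"
  shows "sat (compat_prod le q) e (in_first_factor t) \<longleftrightarrow> snd (teval e t) = 0"
proof -
  obtain a h where "teval e t = (a, h)" by fastforce
  with ordered_group_le_zero_or_neg[OF assms, of a] show ?thesis
    by (auto simp: in_first_factor_def compat_prod_def)
qed

fun relativize_first :: "fm \<Rightarrow> fm" where
  "relativize_first (FEx n \<phi>) = FEx n (FConj (in_first_factor (Var n)) (relativize_first \<phi>))"
| "relativize_first (FAll n \<phi>) = FAll n (FImp (in_first_factor (Var n)) (relativize_first \<phi>))"
| "relativize_first (FNot \<phi>) = FNot (relativize_first \<phi>)"
| "relativize_first (FConj \<phi> \<psi>) = FConj (relativize_first \<phi>) (relativize_first \<psi>)"
| "relativize_first (FDisj \<phi> \<psi>) = FDisj (relativize_first \<phi>) (relativize_first \<psi>)"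
| "relativize_first (FImp \<phi> \<psi>) = FImp (relativize_first \<phi>) (relativize_first \<psi>)"
| "relativize_first \<phi> = \<phi>"

lemma fvars_relativize_first: "fvars (relativize_first \<phi>) \<subseteq> fvars \<phi>"
  by (induction \<phi>) auto

lemma teval_snd_zero: "(\<And>n. snd (e n) = 0) \<Longrightarrow> snd (teval e t) = 0"
  by (induction t) auto

lemma sat_relativize_first:
  assumes "ordered_group le" and "\<And>n. snd (e n) = 0"
  shows "sat (compat_prod le q) e (relativize_first \<phi>) \<longleftrightarrow> sat le (fst \<circ> e) \<phi>"
  using assms(2)
proof (induction \<phi> arbitrary: e)
  case (FEq s t)
  then show ?case
    using teval_snd_zero[of e s] teval_snd_zero[of e t]
    by (auto simp: teval_prod[of e] prod_eq_iff simp del: comp_apply)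
next
  case (FRel s t)
  then show ?case
    using teval_snd_zero[of e s] teval_snd_zero[of e t]
    by (auto simp: teval_prod[of e] compat_prod_def simp del: comp_apply)
next
  case (FEx n \<phi>)
  have "sat (compat_prod le q) e (relativize_first (FEx n \<phi>)) \<longleftrightarrow>
          (\<exists>a. sat (compat_prod le q) (e(n := (a, 0))) (relativize_first \<phi>))"
    by (auto simp: sat_in_first_factor[OF assms(1)])
  also have "\<dots> \<longleftrightarrow> (\<exists>a. sat le (fst \<circ> e(n := (a, 0))) \<phi>)"
    by (intro ex_cong1 FEx.IH) (simp add: FEx.prems)
  also have "\<dots> \<longleftrightarrow> (\<exists>a. sat le ((fst \<circ> e)(n := a)) \<phi>)"
    unfolding fun_upd_comp by simp
  finally show ?case by (simp only: sat.simps)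
next
  case (FAll n \<phi>)
  have "sat (compat_prod le q) e (relativize_first (FAll n \<phi>)) \<longleftrightarrow>
          (\<forall>a. sat (compat_prod le q) (e(n := (a, 0))) (relativize_first \<phi>))"
    by (auto simp: sat_in_first_factor[OF assms(1)])
  also have "\<dots> \<longleftrightarrow> (\<forall>a. sat le (fst \<circ> e(n := (a, 0))) \<phi>)"
    by (intro all_cong1 FAll.IH) (simp add: FAll.prems)
  also have "\<dots> \<longleftrightarrow> (\<forall>a. sat le ((fst \<circ> e)(n := a)) \<phi>)"
    unfolding fun_upd_comp by simp
  finally show ?case by (simp only: sat.simps)
qed auto

lemma elem_equiv_first_factor:
  assumes "ordered_group le1" and "ordered_group le2"
    and "elem_equiv (compat_prod le1 q1) (compat_prod le2 q2)"
  shows "elem_equiv le1 le2"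
proof (rule elem_equiv_via_translation[where T = relativize_first, OF _ _ _ assms(3)])
  show "fvars (relativize_first \<phi>) = {}" if "fvars \<phi> = {}" for \<phi>
    using fvars_relativize_first[of \<phi>] that by blast
  show "sat le1 (\<lambda>_. 0) \<phi> \<longleftrightarrow> sat (compat_prod le1 q1) (\<lambda>_. 0) (relativize_first \<phi>)" for \<phi>
    using sat_relativize_first[OF assms(1), of "\<lambda>_. 0" q1 \<phi>] by (simp add: comp_const_zero)
  show "sat le2 (\<lambda>_. 0) \<phi> \<longleftrightarrow> sat (compat_prod le2 q2) (\<lambda>_. 0) (relativize_first \<phi>)" for \<phi>
    using sat_relativize_first[OF assms(2), of "\<lambda>_. 0" q2 \<phi>] by (simp add: comp_const_zero)
qed

fun interpret_second :: "fm \<Rightarrow> fm" where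
  "interpret_second (FEq s t) = in_first_factor (Plus s (Neg t))"
| "interpret_second (FRel s t) =
     FDisj (FConj (in_first_factor s) (in_first_factor t))
       (FConj (FNot (in_first_factor t)) (FRel s t))"
| "interpret_second FFalse = FFalse"
| "interpret_second (FNot \<phi>) = FNot (interpret_second \<phi>)"
| "interpret_second (FConj \<phi> \<psi>) = FConj (interpret_second \<phi>) (interpret_second \<psi>)"
| "interpret_second (FDisj \<phi> \<psi>) = FDisj (interpret_second \<phi>) (interpret_second \<psi>)"
| "interpret_second (FImp \<phi> \<psi>) = FImp (interpret_second \<phi>) (interpret_second \<psi>)"
| "interpret_second (FEx n \<phi>) = FEx n (interpret_second \<phi>)"
| "interpret_second (FAll n \<phi>) = FAll n (interpret_second \<phi>)"

lemma fvars_interpret_second: "fvars (interpret_second \<phi>) \<subseteq> fvars \<phi>"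
  by (induction \<phi>) auto

lemma valuational_via_le_zero_iff:
  assumes "valuational_via w q"
  shows "q h 0 \<longleftrightarrow> h = 0"
proof -
  have "w 0 = None" and "w h = None \<longleftrightarrow> h = 0" and "q h 0 \<longleftrightarrow> vle (w 0) (w h)"
    using assms unfolding valuational_via_def valuation_def by auto
  then show ?thesis by (cases "w h") auto
qed

lemma sat_interpret_second:
  assumes "ordered_group le" and "valuational_via w q"
  shows "sat (compat_prod le q) e (interpret_second \<phi>) \<longleftrightarrow> sat q (snd \<circ> e) \<phi>"
proof (induction \<phi> arbitrary: e)
  case (FEq s t)
  show ?case
    by (simp add: sat_in_first_factor[OF assms(1)] teval_prod[of e] del: comp_apply)
next
  case (FRel s t)
  obtain a h where s: "teval e s = (a, h)" by fastforce
  obtain a' h' where t: "teval e t = (a', h')" by fastforce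
  have "sat (compat_prod le q) e (interpret_second (FRel s t)) \<longleftrightarrow>
          (h = 0 \<and> h' = 0) \<or> (h' \<noteq> 0 \<and> compat_prod le q (a, h) (a', h'))"
    by (simp add: sat_in_first_factor[OF assms(1)] s t)
  also have "\<dots> \<longleftrightarrow> q h h'"
    using valuational_via_le_zero_iff[OF assms(2), of h] by (auto simp: compat_prod_def)
  moreover have "h = teval (snd \<circ> e) s" and "h' = teval (snd \<circ> e) t"
    using teval_prod[of e s] teval_prod[of e t] by (simp_all add: s t)
  ultimately show ?case by (simp only: sat.simps)
qed (simp_all add: fun_upd_comp del: comp_apply)

lemma elem_equiv_second_factor:
  assumes "ordered_group le1" and "ordered_group le2"
    and "valuational_via w1 q1" and "valuational_via w2 q2"
    and "elem_equiv (compat_prod le1 q1) (compat_prod le2 q2)"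
  shows "elem_equiv q1 q2"
proof (rule elem_equiv_via_translation[where T = interpret_second, OF _ _ _ assms(5)])
  show "fvars (interpret_second \<phi>) = {}" if "fvars \<phi> = {}" for \<phi>
    using fvars_interpret_second[of \<phi>] that by blast
  show "sat q1 (\<lambda>_. 0) \<phi> \<longleftrightarrow> sat (compat_prod le1 q1) (\<lambda>_. 0) (interpret_second \<phi>)" for \<phi>
    using sat_interpret_second[OF assms(1,3), of "\<lambda>_. 0" \<phi>] by (simp add: comp_const_zero)
  show "sat q2 (\<lambda>_. 0) \<phi> \<longleftrightarrow> sat (compat_prod le2 q2) (\<lambda>_. 0) (interpret_second \<phi>)" for \<phi>
    using sat_interpret_second[OF assms(2,4), of "\<lambda>_. 0" \<phi>] by (simp add: comp_const_zero)
qed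

theorem mainTheorem17:
  fixes le1 :: "'a::ab_group_add \<Rightarrow> 'a \<Rightarrow> bool"
    and le2 :: "'c::ab_group_add \<Rightarrow> 'c \<Rightarrow> bool"
    and q1 :: "'b::ab_group_add \<Rightarrow> 'b \<Rightarrow> bool"
    and q2 :: "'d::ab_group_add \<Rightarrow> 'd \<Rightarrow> bool"
    and w1 :: "'b \<Rightarrow> 'v1::linorder option"
    and w2 :: "'d \<Rightarrow> 'v2::linorder option"
  assumes "ordered_group le1" and "ordered_group le2"
    and "valuational_via w1 q1" and "valuational_via w2 q2"
  shows "elem_equiv (compat_prod le1 q1) (compat_prod le2 q2) \<longleftrightarrow>
           (elem_equiv le1 le2 \<and> elem_equiv q1 q2)"
  using elem_equiv_compat_prod elem_equiv_first_factor[OF assms(1,2)]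
    elem_equiv_second_factor[OF assms] by blast

end
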